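(* Let $\mathfrak g=\mathfrak{sl}_2$ with simple root $\alpha_1$ normalized by $(\alpha_1,\alpha_1)=2$, let $k\ge0$ be an integer and $V=V_\Lambda$ the irreducible $(2k+1)$-dimensional module of highest weight $\Lambda=k\alpha_1$ with highest weight vector $v_\Lambda$ ($n=1$, $z_1=0$, so $Z_1=1$). Let $\xi\in\mathfrak h^*$ with $\xi_1:=(\xi,\alpha_1)\notin\{1,\dots,k\}$, and let $t_{cr}=(t_1,\dots,t_k)$ be an isolated critical point of $$\Phi_H(t)=\sum_{1\le j<j'\le k}2\log(t_j-t_{j'})-2k\sum_{j=1}^k\log(t_j-1)-(\xi_1-1)\sum_{j=1}^k\log t_j.$$ Let $u=\Big(\prod_{j=1}^k\frac{1}{t_j-1}\Big)\Big|_{t=t_{cr}}\,f^kv_\Lambda\in V[0]$ (the Bethe vector $u(t_{cr},1)$). Then $$\langle\psi^\xi_u,\psi^\xi_u\rangle=\frac{\big[(\xi_1+1)(\xi_1+2)\cdots(\xi_1+k)\big]^3\,k!}{(\xi_1-1)(\xi_1-2)\cdots(\xi_1-k)\,(k+1)(k+2)\cdots(2k)}.$$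
   Context: Notation for $\mathfrak g=\mathfrak{sl}_2$: Cartan subalgebra $\mathfrak h$, simple root $\alpha_1$, $\rho=\frac12\alpha_1$, invariant form $(\cdot,\cdot)$ with $(\alpha_1,\alpha_1)=2$; Chevalley generators $e,f,h$; $\omega$ the automorphism of $U(\mathfrak g)$ with $\omega(e)=-f,\omega(f)=-e,\omega(h)=-h$; $a$ the anti-automorphism with $a(x)=-x$ for $x\in\mathfrak g$. $\gamma:U(\mathfrak g)\to\mathbb C[\mathfrak h^*]$ projection along $fU(\mathfrak g)+U(\mathfrak g)e$; $S_\mu(g_1,g_2)=\gamma(a\omega(g_1)g_2)(\mu)$. The Shapovalov form $S$ on $V$ is the symmetric bilinear form with $S(v_\Lambda,v_\Lambda)=1$ and $S(gx,y)=S(x,a\omega(g)y)$. Basis $\{F_j\}_{j\ge0}=\{f^j\}$ of $U(\mathfrak n_-)$; $(S^{-1}_\lambda)_{jk}$: entries of the inverse of $(S_\lambda(F_j,F_k))$. $X=e^{-2\pi i\alpha_1(\lambda)}$ for $\lambda\in\mathfrak h$. $A_X$ is the linear map on $U(\mathfrak n_-)$ given on $f^m$ by $A_X(f^m)=\sum_{\sigma\in S_m}\prod_{k=1}^m\frac{X^{a^\sigma_k+1}}{1-X^k}f^m$, $a_k^\sigma=\#\{j:k\le j\le m-1,\sigma(j)>\sigma(j+1)\}$, $A_X(1)=1$. For $u\in V[0]$ (under the hypothesis on $\xi_1$ the needed inverse entries are regular at $\xi-\rho$), $\psi^\xi_u(\lambda)=e^{2\pi i\xi(\lambda)}\sum_{j,k\ge0}(S^{-1}_{\xi-\rho})_{jk}A_X(F_j)\omega(F_k)u$,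 a $V[0]$-valued function of $\lambda\in\mathfrak h$. The pairing is $\langle\psi_1,\psi_2\rangle=\int_{-i\delta}^{1-i\delta}S(\psi_1(\lambda),\psi_2(-\lambda))\,dy$, with coordinate $y=\alpha_1(\lambda)$ on $\mathfrak h$ and any $\delta>0$. A critical point of $\Phi_H$ is a point with $t_j\ne t_{j'}$ ($j\neq j'$), $t_j\ne0,1$, where all $\partial\Phi_H/\partial t_j$ vanish; isolated means isolated in the critical set. *)

theory Defs
  imports "HOL-Analysis.Analysis" "HOL-Combinatorics.Permutations"
begin

text \<open>A vector of V is represented by its coordinates w.r.t. the basis
  f^i v_Lambda, i = 0..2k (coordinates with i > 2k are ignored).
  Since (Lambda, alpha1) = 2k, h v = 2k v, and e f^i v = i (2k - i + 1) f^(i-1) v.\<close>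

type_synonym vec = "nat \<Rightarrow> complex"

definition f_act :: "nat \<Rightarrow> vec \<Rightarrow> vec" where
  "f_act k x = (\<lambda>i. if i = 0 \<or> i > 2*k then 0 else x (i - 1))"

definition e_act :: "nat \<Rightarrow> vec \<Rightarrow> vec" where
  "e_act k x = (\<lambda>i. if i < 2*k then of_nat (i+1) * (of_nat (2*k) - of_nat i) * x (i+1) else 0)"

definition h_act :: "nat \<Rightarrow> vec \<Rightarrow> vec" where
  "h_act k x = (\<lambda>i. if i \<le> 2*k then (of_nat (2*k) - 2 * of_nat i) * x i else 0)"

definition bil :: "nat \<Rightarrow> (nat \<Rightarrow> nat \<Rightarrow> complex) \<Rightarrow> vec \<Rightarrow> vec \<Rightarrow> complex" where
  "bil k G x y = (\<Sum>i\<le>2*k. \<Sum>j\<le>2*k. x i * y j * G i j)"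

text \<open>Shapovalov form: symmetric bilinear, S(v,v) = 1, S(g x, y) = S(x, a omega(g) y),
  where a omega(e) = f, a omega(f) = e, a omega(h) = h.\<close>
definition is_shap_gram :: "nat \<Rightarrow> (nat \<Rightarrow> nat \<Rightarrow> complex) \<Rightarrow> bool" where
  "is_shap_gram k G \<longleftrightarrow>
     (\<forall>i j. (2*k < i \<or> 2*k < j) \<longrightarrow> G i j = 0) \<and>
     (\<forall>i j. G i j = G j i) \<and>
     G 0 0 = 1 \<and>
     (\<forall>x y. bil k G (e_act k x) y = bil k G x (f_act k y)) \<and>
     (\<forall>x y. bil k G (f_act k x) y = bil k G x (e_act k y)) \<and>
     (\<forall>x y. bil k G (h_act k x) y = bil k G x (h_act k y))"

definition shap :: "nat \<Rightarrow> vec \<Rightarrow> vec \<Rightarrow> complex" where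
  "shap k x y = bil k (THE G. is_shap_gram k G) x y"

text \<open>Verma module M_mu, in coordinates w.r.t. the basis f^i v_mu, with muh = (mu, alpha1):
  e f^(i+1) v_mu = (i+1)(muh - i) f^i v_mu.  For g in U(g), gamma(g)(mu) is the coefficient of
  v_mu in g v_mu whenever g has weight 0; S_mu(f^j, f^m) = gamma(e^j f^m)(mu)
  (which is 0 for j \<noteq> m, by weight).\<close>

definition verma_e :: "complex \<Rightarrow> vec \<Rightarrow> vec" where
  "verma_e muh x = (\<lambda>i. of_nat (i+1) * (muh - of_nat i) * x (i+1))"

definition verma_f :: "vec \<Rightarrow> vec" where
  "verma_f x = (\<lambda>i. if i = 0 then 0 else x (i - 1))"

definition shapU :: "complex \<Rightarrow> nat \<Rightarrow> nat \<Rightarrow> complex" where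
  "shapU muh j m = ((verma_e muh ^^ j) ((verma_f ^^ m) (\<lambda>i. if i = 0 then 1 else 0))) 0"

text \<open>Inverse of the Shapovalov matrix (S_mu(F_j,F_m)): the matrix is block diagonal by
  weight with 1x1 blocks (F_j = f^j has weight -j alpha1), so the inverse is computed blockwise.\<close>
definition shapU_inv :: "complex \<Rightarrow> nat \<Rightarrow> nat \<Rightarrow> complex" where
  "shapU_inv muh j m = (if j = m then inverse (shapU muh j j) else 0)"

section \<open>The map A_X on U(n_-): A_X(f^m) = AX_coeff X m * f^m\<close>

definition desc_count :: "(nat \<Rightarrow> nat) \<Rightarrow> nat \<Rightarrow> nat \<Rightarrow> nat" where
  "desc_count \<sigma> m k = card {j. k \<le> j \<and> j \<le> m - 1 \<and> \<sigma> j > \<sigma> (j+1)}"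

definition AX_coeff :: "complex \<Rightarrow> nat \<Rightarrow> complex" where
  "AX_coeff X m = (\<Sum>\<sigma>\<in>{\<sigma>. \<sigma> permutes {1..m}}.
      \<Prod>k=1..m. X ^ (desc_count \<sigma> m k + 1) / (1 - X ^ k))"

text \<open>lambda in h is given by the coordinate y = alpha1(lambda); since (alpha1,alpha1) = 2,
  xi(lambda) = xi1 * y / 2 where xi1 = (xi, alpha1); X = exp(-2 pi i y);
  (xi - rho, alpha1) = xi1 - 1; omega(f^m) = (-e)^m.  For m > 2k, e^m = 0 on V, hence all
  nonzero terms of the double sum have j, m \<le> 2k.\<close>

definition psi :: "nat \<Rightarrow> complex \<Rightarrow> vec \<Rightarrow> complex \<Rightarrow> vec" where
  "psi k xi1 u y =
     (let X = exp (- 2 * pi * \<i> * y) in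
      (\<lambda>i. exp (2 * pi * \<i> * (xi1 * y / 2)) *
         (\<Sum>j\<le>2*k. \<Sum>m\<le>2*k. shapU_inv (xi1 - 1) j m * AX_coeff X j *
             ((f_act k ^^ j) (((\<lambda>x. - e_act k x) ^^ m) u)) i)))"

definition pairing :: "nat \<Rightarrow> (complex \<Rightarrow> vec) \<Rightarrow> (complex \<Rightarrow> vec) \<Rightarrow> real \<Rightarrow> complex" where
  "pairing k p1 p2 \<delta> =
     integral {0..1::real} (\<lambda>x. shap k (p1 (of_real x - \<i> * of_real \<delta>))
                                        (p2 (- (of_real x - \<i> * of_real \<delta>))))"

text \<open>Phi_H(t) = sum_{j<j'} 2 log(t_j - t_j') - 2k sum_j log(t_j - 1) - (xi1 - 1) sum_j log t_j
  (multivalued); its partial derivatives are single valued:\<close>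
definition dPhi_H :: "nat \<Rightarrow> complex \<Rightarrow> (nat \<Rightarrow> complex) \<Rightarrow> nat \<Rightarrow> complex" where
  "dPhi_H k xi1 t j =
     (\<Sum>j'\<in>{1..k} - {j}. 2 / (t j - t j')) - 2 * of_nat k / (t j - 1) - (xi1 - 1) / t j"

definition is_crit :: "nat \<Rightarrow> complex \<Rightarrow> (nat \<Rightarrow> complex) \<Rightarrow> bool" where
  "is_crit k xi1 t \<longleftrightarrow>
     (\<forall>j\<in>{1..k}. \<forall>j'\<in>{1..k}. j \<noteq> j' \<longrightarrow> t j \<noteq> t j') \<and>
     (\<forall>j\<in>{1..k}. t j \<noteq> 0 \<and> t j \<noteq> 1) \<and>
     (\<forall>j\<in>{1..k}. dPhi_H k xi1 t j = 0)"

definition is_isolated_crit :: "nat \<Rightarrow> complex \<Rightarrow> (nat \<Rightarrow> complex) \<Rightarrow> bool" where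
  "is_isolated_crit k xi1 t \<longleftrightarrow> is_crit k xi1 t \<and>
     (\<exists>\<epsilon>>0. \<forall>s. is_crit k xi1 s \<and> (\<forall>j\<in>{1..k}. cmod (s j - t j) < \<epsilon>)
                \<longrightarrow> (\<forall>j\<in>{1..k}. s j = t j))"

definition bethe_vec :: "nat \<Rightarrow> (nat \<Rightarrow> complex) \<Rightarrow> vec" where
  "bethe_vec k t = (\<lambda>i. if i = k then (\<Prod>j=1..k. 1 / (t j - 1)) else 0)"

end

theory Submission
  imports Defs "HOL-Computational_Algebra.Polynomial" "HOL-Combinatorics.Multiset_Permutations"
begin

(* The weight-zero space V[0] is the line spanned by f^k v_Lambda and the Bethe vector is
   c f^k v_Lambda with c = prod_j 1/(t_j - 1), so the theorem is a scalar identity. *)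

section \<open>The Shapovalov form of V\<close>

text \<open>The squared norm of the basis vector f^i v_Lambda.\<close>
definition shap_norm :: "nat \<Rightarrow> nat \<Rightarrow> complex" where
  "shap_norm k i = (\<Prod>r<i. of_nat (r+1) * (of_nat (2*k) - of_nat r))"

definition shap_gram :: "nat \<Rightarrow> nat \<Rightarrow> nat \<Rightarrow> complex" where
  "shap_gram k i j = (if i = j \<and> i \<le> 2*k then shap_norm k i else 0)"

definition unit_vec :: "nat \<Rightarrow> complex \<Rightarrow> vec" where
  "unit_vec n a = (\<lambda>l. if l = n then a else 0)"

lemma bil_shap_gram: "bil k (shap_gram k) x y = (\<Sum>i\<le>2*k. x i * y i * shap_norm k i)"
  unfolding bil_def shap_gram_def
  by (rule sum.cong[OF refl]) (auto simp: if_distrib cong: if_cong)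

lemma shap_norm_Suc:
  "shap_norm k (Suc i) = shap_norm k i * (of_nat (i+1) * (of_nat (2*k) - of_nat i))"
  by (simp add: shap_norm_def)

lemma shap_gram_e: "bil k (shap_gram k) (e_act k x) y = bil k (shap_gram k) x (f_act k y)"
proof (cases k)
  case 0 then show ?thesis by (simp add: bil_shap_gram e_act_def f_act_def)
next
  case (Suc k')
  define M where "M = 2*k - 1"
  have N: "2*k = Suc M" using Suc M_def by simp
  have "bil k (shap_gram k) (e_act k x) y = (\<Sum>i\<le>M. e_act k x i * y i * shap_norm k i)"
    by (simp add: bil_shap_gram N e_act_def)
  also have "\<dots> = (\<Sum>i\<le>M. x (Suc i) * y i * shap_norm k (Suc i))"
    by (rule sum.cong[OF refl])
       (use Suc in \<open>auto simp: e_act_def N shap_norm_Suc algebra_simps M_def\<close>)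
  also have "\<dots> = (\<Sum>i\<le>Suc M. x i * f_act k y i * shap_norm k i)"
    by (subst sum.atMost_Suc_shift) (simp add: f_act_def N)
  also have "\<dots> = bil k (shap_gram k) x (f_act k y)" by (simp add: bil_shap_gram N)
  finally show ?thesis .
qed

lemma bil_shap_gram_sym: "bil k (shap_gram k) x y = bil k (shap_gram k) y x"
  unfolding bil_shap_gram by (rule sum.cong[OF refl]) simp

lemma shap_gram_f: "bil k (shap_gram k) (f_act k x) y = bil k (shap_gram k) x (e_act k y)"
  by (metis bil_shap_gram_sym shap_gram_e)

lemma shap_gram_h: "bil k (shap_gram k) (h_act k x) y = bil k (shap_gram k) x (h_act k y)"
  unfolding bil_shap_gram by (rule sum.cong[OF refl]) (simp add: h_act_def)

lemma is_shap_gram_shap_gram: "is_shap_gram k (shap_gram k)"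
  unfolding is_shap_gram_def using shap_gram_e shap_gram_f shap_gram_h
  by (auto simp: shap_gram_def shap_norm_def)

lemma bil_unit_vec:
  assumes i: "i \<le> 2*k" and j: "j \<le> 2*k"
  shows "bil k G (unit_vec i a) (unit_vec j b) = a * b * G i j"
proof -
  have single: "(\<Sum>l\<le>2*k. unit_vec n c l * g l) = c * g n" if "n \<le> 2*k" for n c g
  proof -
    have "(\<Sum>l\<le>2*k. unit_vec n c l * g l) = unit_vec n c n * g n
        + (\<Sum>l\<in>{..2*k}-{n}. unit_vec n c l * g l)"
      using that by (subst sum.remove[of _ n]) auto
    also have "(\<Sum>l\<in>{..2*k}-{n}. unit_vec n c l * g l) = 0"
      by (rule sum.neutral) (auto simp: unit_vec_def)
    finally show ?thesis by (simp add: unit_vec_def)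
  qed
  have "bil k G (unit_vec i a) (unit_vec j b) = (\<Sum>i'\<le>2*k. unit_vec i a i' * (b * G i' j))"
    unfolding bil_def using single[OF j, of b "\<lambda>j'. unit_vec i a _ * G _ j'"]
    by (simp add: mult_ac)
  also have "\<dots> = a * b * G i j"
    by (simp only: single[OF i, of a "\<lambda>i'. b * G i' j"] mult.assoc)
  finally show ?thesis .
qed

text \<open>Uniqueness: h-invariance forces weight spaces to be orthogonal, and the adjointness
  of e and f determines the diagonal inductively from G 0 0 = 1.\<close>
lemma is_shap_gram_offdiag:
  assumes G: "is_shap_gram k G" and ij: "i \<le> 2*k" "j \<le> 2*k" "i \<noteq> j"
  shows "G i j = 0"
proof -
  have h: "h_act k (unit_vec n 1) = unit_vec n (of_nat (2*k) - 2 * of_nat n)" if "n \<le> 2*k" for n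
    using that by (auto simp: h_act_def unit_vec_def)
  have "bil k G (h_act k (unit_vec i 1)) (unit_vec j 1) = bil k G (unit_vec i 1) (h_act k (unit_vec j 1))"
    using G by (simp add: is_shap_gram_def)
  then have "(of_nat (2*k) - 2 * of_nat i) * G i j = (of_nat (2*k) - 2 * of_nat j) * G i j"
    using ij by (simp add: h bil_unit_vec)
  then show ?thesis using ij(3) by auto
qed

lemma is_shap_gram_diag:
  assumes G: "is_shap_gram k G" and i: "i \<le> 2*k"
  shows "G i i = shap_norm k i"
  using i
proof (induction i)
  case 0 then show ?case using G by (simp add: is_shap_gram_def shap_norm_def)
next
  case (Suc i)
  have e: "e_act k (unit_vec (Suc i) 1) = unit_vec i (of_nat (i+1) * (of_nat (2*k) - of_nat i))"
    using Suc.prems by (intro ext) (auto simp: e_act_def unit_vec_def)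
  have f: "f_act k (unit_vec i 1) = unit_vec (Suc i) 1"
    using Suc.prems by (intro ext) (auto simp: f_act_def unit_vec_def)
  have "bil k G (e_act k (unit_vec (Suc i) 1)) (unit_vec i 1)
      = bil k G (unit_vec (Suc i) 1) (f_act k (unit_vec i 1))"
    using G by (simp add: is_shap_gram_def)
  then have "of_nat (i+1) * (of_nat (2*k) - of_nat i) * G i i = G (Suc i) (Suc i)"
    using Suc.prems by (simp add: e f bil_unit_vec)
  then show ?case using Suc by (simp add: shap_norm_Suc mult_ac)
qed

lemma is_shap_gram_unique:
  assumes G: "is_shap_gram k G" shows "G = shap_gram k"
proof (intro ext)
  fix i j
  show "G i j = shap_gram k i j"
  proof (cases "2*k < i \<or> 2*k < j")
    case True then show ?thesis using G by (auto simp: is_shap_gram_def shap_gram_def)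
  next
    case False then show ?thesis
      using is_shap_gram_offdiag[OF G] is_shap_gram_diag[OF G] by (auto simp: shap_gram_def)
  qed
qed

lemma shap_eq_bil: "shap k = bil k (shap_gram k)"
proof -
  have "(THE G. is_shap_gram k G) = shap_gram k"
    using is_shap_gram_shap_gram is_shap_gram_unique by blast
  then show ?thesis by (simp add: shap_def[abs_def])
qed

lemma shap_unit_vec:
  "n \<le> 2*k \<Longrightarrow> shap k (unit_vec n a) (unit_vec n b) = a * b * shap_norm k n"
  by (simp add: shap_eq_bil bil_unit_vec shap_gram_def)

lemma shap_norm_middle: "shap_norm k k = of_nat (fact k * (\<Prod>i=k+1..2*k. i))"
proof -
  have "(\<Prod>r<k. 2*k - r) = (\<Prod>i=k+1..2*k. i)"
    by (rule prod.reindex_bij_witness[where i="\<lambda>i. 2*k - i" and j="\<lambda>r. 2*k - r"]) auto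
  moreover have "(\<Prod>r<k. (of_nat (2*k) - of_nat r :: complex)) = (\<Prod>r<k. of_nat (2*k - r))"
    by (rule prod.cong) (auto simp: of_nat_diff)
  ultimately have "(\<Prod>r<k. (of_nat (2*k) - of_nat r :: complex)) = of_nat (\<Prod>i=k+1..2*k. i)"
    by (metis of_nat_prod)
  moreover have "(\<Prod>r<k. (of_nat (r+1) :: complex)) = fact k"
    by (simp add: fact_prod_Suc atLeast0LessThan)
  ultimately show ?thesis by (simp add: shap_norm_def prod.distrib)
qed

section \<open>The function psi on the weight-zero line\<close>

text \<open>The scalar by which f^m (-e)^m acts on f^k v_Lambda is (-1)^m ef_coeff k m.\<close>
definition ef_coeff :: "nat \<Rightarrow> nat \<Rightarrow> complex" where
  "ef_coeff k m = (\<Prod>r<m. of_nat (k - r) * of_nat (k + r + 1))"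

lemma ef_coeff_Suc: "ef_coeff k (Suc m) = ef_coeff k m * (of_nat (k - m) * of_nat (k + m + 1))"
  by (simp add: ef_coeff_def)

lemma ef_coeff_vanishes: "k < m \<Longrightarrow> ef_coeff k m = 0"
  unfolding ef_coeff_def by (rule prod_zero) (auto intro: bexI[of _ k])

lemma e_unit_vec:
  "n \<le> 2*k \<Longrightarrow> e_act k (unit_vec n a) = unit_vec (n - 1) (of_nat n * (of_nat (2*k) - of_nat (n - 1)) * a)"
  by (intro ext) (auto simp: e_act_def unit_vec_def)

lemma f_unit_vec: "Suc n \<le> 2*k \<Longrightarrow> f_act k (unit_vec n a) = unit_vec (Suc n) a"
  by (intro ext) (auto simp: f_act_def unit_vec_def)

lemma f_pow_unit_vec: "n + j \<le> 2*k \<Longrightarrow> (f_act k ^^ j) (unit_vec n a) = unit_vec (n + j) a"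
  by (induction j) (auto simp: f_unit_vec)

lemma f_pow_zero: "(f_act k ^^ j) (\<lambda>_. 0) = (\<lambda>_. 0)"
  by (induction j) (auto simp: f_act_def)

lemma unit_vec_zero: "unit_vec n 0 = (\<lambda>_. 0)"
  by (auto simp: unit_vec_def)

lemma minus_e_pow_middle:
  "((\<lambda>x. - e_act k x) ^^ m) (unit_vec k a) = unit_vec (k - m) ((-1)^m * ef_coeff k m * a)"
proof (induction m)
  case 0 then show ?case by (simp add: ef_coeff_def)
next
  case (Suc m)
  have "((\<lambda>x. - e_act k x) ^^ Suc m) (unit_vec k a)
      = - e_act k (unit_vec (k - m) ((-1)^m * ef_coeff k m * a))"
    by (simp add: Suc.IH)
  also have "\<dots> = unit_vec (k - Suc m) ((-1)^Suc m * ef_coeff k (Suc m) * a)"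
  proof (cases "m < k")
    case True then show ?thesis
      by (subst e_unit_vec) (auto simp: unit_vec_def ef_coeff_Suc algebra_simps)
  next
    case False then show ?thesis
      by (subst e_unit_vec) (auto simp: unit_vec_def ef_coeff_Suc)
  qed
  finally show ?case .
qed

lemma f_pow_minus_e_pow_middle:
  "(f_act k ^^ m) (((\<lambda>x. - e_act k x) ^^ m) (unit_vec k a)) = unit_vec k ((-1)^m * ef_coeff k m * a)"
proof (cases "m \<le> k")
  case True then show ?thesis by (simp add: minus_e_pow_middle f_pow_unit_vec)
next
  case False then show ?thesis
    by (simp add: minus_e_pow_middle ef_coeff_vanishes unit_vec_zero f_pow_zero)
qed

text \<open>The coefficient of A_X(f^j) in psi: the inverse Shapovalov matrix of the Verma
  module is diagonal, so only the terms F_j = f^j, omega(F_j) = (-e)^j survive.\<close>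
definition beta :: "nat \<Rightarrow> complex \<Rightarrow> nat \<Rightarrow> complex" where
  "beta k xi1 j = (-1)^j * ef_coeff k j / shapU (xi1 - 1) j j"

definition psi_factor :: "nat \<Rightarrow> complex \<Rightarrow> complex \<Rightarrow> complex" where
  "psi_factor k xi1 X = (\<Sum>j\<le>2*k. beta k xi1 j * AX_coeff X j)"

lemma psi_middle:
  "psi k xi1 (unit_vec k c) y =
     unit_vec k (exp (2 * pi * \<i> * (xi1 * y / 2)) * c * psi_factor k xi1 (exp (- 2 * pi * \<i> * y)))"
proof (intro ext)
  fix i
  define E where "E = exp (2 * pi * \<i> * (xi1 * y / 2))"
  define A where "A j = AX_coeff (exp (- 2 * pi * \<i> * y)) j" for j
  have diag: "shapU_inv (xi1 - 1) j m * A j * (f_act k ^^ j) (((\<lambda>x. - e_act k x) ^^ m) (unit_vec k c)) i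
      = (if m = j then inverse (shapU (xi1 - 1) j j) * A j * unit_vec k ((-1)^j * ef_coeff k j * c) i
         else 0)" for j m
    by (simp add: shapU_inv_def f_pow_minus_e_pow_middle)
  have "psi k xi1 (unit_vec k c) y i
      = E * (\<Sum>j\<le>2*k. inverse (shapU (xi1 - 1) j j) * A j * unit_vec k ((-1)^j * ef_coeff k j * c) i)"
    unfolding psi_def Let_def E_def[symmetric] A_def[symmetric] diag by simp
  also have "\<dots> = unit_vec k (E * c * (\<Sum>j\<le>2*k. beta k xi1 j * A j)) i"
  proof (cases "i = k")
    case True
    have "(\<Sum>j\<le>2*k. inverse (shapU (xi1 - 1) j j) * A j * unit_vec k ((-1)^j * ef_coeff k j * c) i)
        = c * (\<Sum>j\<le>2*k. beta k xi1 j * A j)"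
      unfolding sum_distrib_left
      by (rule sum.cong[OF refl]) (simp add: True unit_vec_def beta_def divide_inverse mult_ac)
    then show ?thesis using True by (simp add: unit_vec_def mult.assoc)
  qed (simp add: unit_vec_def)
  finally show "psi k xi1 (unit_vec k c) y i = unit_vec k (exp (2 * pi * \<i> * (xi1 * y / 2)) * c
        * psi_factor k xi1 (exp (- 2 * pi * \<i> * y))) i"
    by (simp add: E_def A_def psi_factor_def)
qed

lemma bethe_vec_middle: "bethe_vec k t = unit_vec k (\<Prod>j=1..k. 1 / (t j - 1))"
  by (intro ext) (simp add: bethe_vec_def unit_vec_def)

section \<open>The coefficients of A_X and the major index\<close>

definition maj :: "nat list \<Rightarrow> nat" where
  "maj xs = (\<Sum>j\<in>{1..<length xs}. if xs!(j-1) > xs!j then j else 0)"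

definition insert_at :: "nat \<Rightarrow> nat \<Rightarrow> nat list \<Rightarrow> nat list" where
  "insert_at p z xs = take p xs @ z # drop p xs"

text \<open>The q-integer [n+1]_q = 1 + q + ... + q^n.\<close>
definition q_int :: "'a::comm_ring_1 \<Rightarrow> nat \<Rightarrow> 'a" where
  "q_int q n = (\<Sum>i\<le>n. q^i)"

lemma maj_snoc:
  "maj (ys @ [x]) = maj ys + (if ys \<noteq> [] \<and> last ys > x then length ys else 0)"
proof -
  have "maj (ys @ [x]) = (\<Sum>j\<in>{1..<Suc (length ys)}. if (ys@[x])!(j-1) > (ys@[x])!j then j else 0)"
    by (simp add: maj_def)
  also have "\<dots> = (if length ys < 1 then 0 else
      (\<Sum>j\<in>{1..<length ys}. if (ys@[x])!(j-1) > (ys@[x])!j then j else 0) +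
      (if (ys@[x])!(length ys - 1) > (ys@[x])!(length ys) then length ys else 0))"
    by (simp only: sum.op_ivl_Suc)
  also have "(\<Sum>j\<in>{1..<length ys}. if (ys@[x])!(j-1) > (ys@[x])!j then j else 0) = maj ys"
    unfolding maj_def by (rule sum.cong) (auto simp: nth_append)
  finally show ?thesis
    by (cases ys rule: rev_cases) (auto simp: nth_append maj_def)
qed

lemma insert_at_snoc: "p \<le> length ys \<Longrightarrow> insert_at p z (ys @ [x]) = insert_at p z ys @ [x]"
  by (simp add: insert_at_def)

lemma insert_at_end: "insert_at (length xs) z xs = xs @ [z]"
  by (simp add: insert_at_def)

lemma maj_snoc_max:
  assumes "\<forall>a\<in>set xs. a < z"
  shows "maj (xs @ [z]) = maj xs"
proof -
  have "\<not> (xs \<noteq> [] \<and> last xs > z)" using assms last_in_set by fastforce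
  then show ?thesis by (simp add: maj_snoc)
qed

lemma maj_insert_at_end: "\<forall>a\<in>set xs. a < z \<Longrightarrow> maj (insert_at (length xs) z xs) = maj xs"
  by (simp add: insert_at_end maj_snoc_max)

lemma maj_insert_at_snoc:
  assumes z: "\<forall>a\<in>set ys. a < z" "x < z"
  shows "p < length ys \<Longrightarrow> maj (insert_at p z (ys @ [x]))
           = maj (insert_at p z ys) + (if last ys > x then length ys + 1 else 0)"
    and "maj (insert_at (length ys) z (ys @ [x])) = maj ys + length ys + 1"
proof -
  assume p: "p < length ys"
  have "last (insert_at p z ys) = last ys" "length (insert_at p z ys) = Suc (length ys)"
    "insert_at p z ys \<noteq> []"
    using p by (auto simp: insert_at_def last_append)
  then show "maj (insert_at p z (ys @ [x]))
      = maj (insert_at p z ys) + (if last ys > x then length ys + 1 else 0)"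
    using p by (simp add: insert_at_snoc maj_snoc)
next
  have "insert_at (length ys) z (ys @ [x]) = (ys @ [z]) @ [x]" by (simp add: insert_at_def)
  moreover have "maj ((ys @ [z]) @ [x]) = maj (ys @ [z]) + length (ys @ [z])"
    using z(2) by (subst maj_snoc) simp
  ultimately show "maj (insert_at (length ys) z (ys @ [x])) = maj ys + length ys + 1"
    using maj_snoc_max[OF z(1)] by simp
qed

lemma q_int_Suc: "q_int q (Suc n) = q_int q n + q ^ Suc n" "q_int q (Suc n) = 1 + q * q_int q n"
  by (simp add: q_int_def) (simp add: q_int_def sum.atMost_Suc_shift sum_distrib_left del: sum.atMost_Suc)

lemma maj_insert_sum:
  fixes q :: "'a::comm_ring_1"
  assumes "\<forall>a\<in>set xs. a < z"
  shows "(\<Sum>p\<le>length xs. q ^ maj (insert_at p z xs)) = q ^ maj xs * q_int q (length xs)"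
  using assms
proof (induction xs rule: rev_induct)
  case Nil then show ?case by (simp add: insert_at_def maj_def q_int_def)
next
  case (snoc x ys)
  define n where "n = length ys"
  define M where "M = maj ys"
  define d where "d = (ys \<noteq> [] \<and> last ys > x)"
  have z: "\<forall>a\<in>set ys. a < z" "x < z" using snoc.prems by auto
  have "(\<Sum>p\<le>n. q ^ maj (insert_at p z ys)) = q ^ M * q_int q n"
    using snoc z by (simp add: n_def M_def)
  then have IH: "(\<Sum>p<n. q ^ maj (insert_at p z ys)) = q ^ M * q_int q n - q ^ M"
    using maj_insert_at_end[OF z(1)]
    by (simp add: lessThan_Suc_atMost[symmetric] eq_diff_eq n_def M_def)
  have inner: "maj (insert_at p z (ys @ [x])) = maj (insert_at p z ys) + (if d then n + 1 else 0)"
    if "p < n" for p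
    using that maj_insert_at_snoc(1)[OF z] by (auto simp: d_def n_def)
  have mid: "maj (insert_at n z (ys @ [x])) = M + n + 1"
    using maj_insert_at_snoc(2)[OF z] by (simp add: n_def M_def)
  have snoc_maj: "maj (ys @ [x]) = M + (if d then n else 0)"
    by (simp add: maj_snoc M_def d_def n_def)
  have last: "maj (insert_at (Suc n) z (ys @ [x])) = M + (if d then n else 0)"
    using maj_insert_at_end[of "ys @ [x]" z] z snoc_maj by (simp add: n_def)
  have "(\<Sum>p\<le>length (ys @ [x]). q ^ maj (insert_at p z (ys @ [x])))
      = (\<Sum>p<n. q ^ maj (insert_at p z (ys @ [x]))) + q ^ maj (insert_at n z (ys @ [x]))
        + q ^ maj (insert_at (Suc n) z (ys @ [x]))"
    by (simp add: n_def lessThan_Suc_atMost[symmetric])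
  also have "\<dots> = (q ^ M * q_int q n - q ^ M) * q ^ (if d then n + 1 else 0) + q ^ (M + n + 1)
        + q ^ (M + (if d then n else 0))"
    by (simp add: inner sum_distrib_right[symmetric] power_add IH mid last)
  also have "\<dots> = q ^ (M + (if d then n else 0)) * q_int q (Suc n)"
  proof (cases d)
    case True then show ?thesis by (simp add: q_int_Suc(2) power_add algebra_simps)
  next
    case False then show ?thesis by (simp add: q_int_Suc(1) power_add algebra_simps)
  qed
  finally show ?case by (simp add: snoc_maj n_def)
qed

lemma insert_at_inj:
  assumes "z \<notin> set xs" "p \<le> length xs" "p' \<le> length xs'"
    and "insert_at p z xs = insert_at p' z xs'"
  shows "xs = xs' \<and> p = p'"
proof -
  have "z \<notin> set (take p xs)" "z \<notin> set (drop p xs)"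
    using assms(1) by (meson in_set_takeD in_set_dropD)+
  from append_Cons_eq_iff[OF this] assms(4)
  have td: "take p xs = take p' xs'" "drop p xs = drop p' xs'" by (simp_all add: insert_at_def)
  then have "p = p'" using assms(2,3) by (metis length_take min.absorb2)
  moreover have "xs = xs'" using td append_take_drop_id by metis
  ultimately show ?thesis by simp
qed

lemma permutations_of_set_insert_max:
  assumes "finite A" "z \<in> A"
  shows "permutations_of_set A
    = (\<lambda>(xs,p). insert_at p z xs) ` (SIGMA xs:permutations_of_set (A - {z}). {..length xs})"
proof (intro set_eqI iffI)
  fix L assume L: "L \<in> permutations_of_set A"
  then have d: "distinct L" "set L = A" using permutations_of_setD by blast+
  then obtain us vs where uv: "L = us @ z # vs" using assms(2) by (meson split_list)
  have "us @ vs \<in> permutations_of_set (A - {z})"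
    using d uv by (intro permutations_of_setI) auto
  moreover have "insert_at (length us) z (us @ vs) = L" using uv by (simp add: insert_at_def)
  ultimately show "L \<in> (\<lambda>(xs,p). insert_at p z xs) ` (SIGMA xs:permutations_of_set (A - {z}). {..length xs})"
    by (intro image_eqI[of _ _ "(us @ vs, length us)"]) auto
next
  fix L assume "L \<in> (\<lambda>(xs,p). insert_at p z xs) ` (SIGMA xs:permutations_of_set (A - {z}). {..length xs})"
  then obtain xs p where xp: "xs \<in> permutations_of_set (A - {z})" "L = insert_at p z xs"
    by auto
  have d: "distinct xs" "set xs = A - {z}" using xp(1) permutations_of_setD by blast+
  then have "distinct (take p xs @ drop p xs)" "set (take p xs @ drop p xs) = A - {z}" by simp_all
  then have "distinct (take p xs @ z # drop p xs)" "set (take p xs @ z # drop p xs) = A"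
    using assms(2) by (auto simp del: append_take_drop_id)
  then show "L \<in> permutations_of_set A" using xp(2) by (auto simp: insert_at_def)
qed

theorem maj_generating_function:
  fixes q :: "'a::comm_ring_1"
  assumes "finite A"
  shows "(\<Sum>L\<in>permutations_of_set A. q ^ maj L) = (\<Prod>i<card A. q_int q i)"
  using assms
proof (induction "card A" arbitrary: A)
  case 0
  then have "A = {}" by simp
  then show ?case by (simp add: maj_def)
next
  case (Suc n)
  define z where "z = Max A"
  define A' where "A' = A - {z}"
  have zA: "z \<in> A" "\<forall>a\<in>A'. a < z"
    using Suc.prems Suc.hyps(2) by (auto simp: z_def A'_def intro: Max_in le_neq_trans)
  have A': "card A' = n" "finite A'" using Suc zA by (auto simp: A'_def)
  have perm: "\<forall>a\<in>set xs. a < z" "length xs = n" if "xs \<in> permutations_of_set A'" for xs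
    using that zA A' permutations_of_setD distinct_card by metis+
  have inj: "inj_on (\<lambda>(xs,p). insert_at p z xs) (SIGMA xs:permutations_of_set A'. {..length xs})"
  proof (rule inj_onI)
    fix u v assume "u \<in> (SIGMA xs:permutations_of_set A'. {..length xs})"
      "v \<in> (SIGMA xs:permutations_of_set A'. {..length xs})"
      "(\<lambda>(xs,p). insert_at p z xs) u = (\<lambda>(xs,p). insert_at p z xs) v"
    then show "u = v" using insert_at_inj perm(1) by (cases u, cases v) fastforce
  qed
  have "(\<Sum>L\<in>permutations_of_set A. q ^ maj L)
      = (\<Sum>(xs,p)\<in>(SIGMA xs:permutations_of_set A'. {..length xs}). q ^ maj (insert_at p z xs))"
    unfolding permutations_of_set_insert_max[OF Suc.prems zA(1)] A'_def[symmetric]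
    by (subst sum.reindex[OF inj]) (simp add: case_prod_unfold)
  also have "\<dots> = (\<Sum>xs\<in>permutations_of_set A'. \<Sum>p\<le>length xs. q ^ maj (insert_at p z xs))"
    by (subst sum.Sigma) (auto simp: A')
  also have "\<dots> = (\<Sum>xs\<in>permutations_of_set A'. q ^ maj xs * q_int q n)"
    by (rule sum.cong[OF refl]) (metis perm maj_insert_sum)
  also have "\<dots> = (\<Prod>i<card A. q_int q i)"
    using Suc.hyps(1)[OF A'(1)[symmetric] A'(2)] Suc.hyps(2) A'(1)
    by (simp add: sum_distrib_right[symmetric] flip: Suc.hyps(2))
  finally show ?case .
qed

lemma permutes_one_line_bij:
  "bij_betw (\<lambda>\<sigma>. map \<sigma> [1..<Suc m]) {\<sigma>. \<sigma> permutes {1..m}} (permutations_of_set {1..m})"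
proof -
  let ?line = "\<lambda>\<sigma>. map \<sigma> [1..<Suc m]"
  have inj: "inj_on ?line {\<sigma>. \<sigma> permutes {1..m}}"
  proof (rule inj_onI, rule ext)
    fix \<sigma> \<tau> i assume "\<sigma> \<in> {\<sigma>. \<sigma> permutes {1..m}}" "\<tau> \<in> {\<sigma>. \<sigma> permutes {1..m}}"
      and "?line \<sigma> = ?line \<tau>"
    then show "\<sigma> i = \<tau> i"
      by (cases "i \<in> {1..m}") (auto simp del: upt_Suc simp: map_eq_conv permutes_not_in)
  qed
  have sub: "?line ` {\<sigma>. \<sigma> permutes {1..m}} \<subseteq> permutations_of_set {1..m}"
  proof
    fix L assume "L \<in> ?line ` {\<sigma>. \<sigma> permutes {1..m}}"
    then obtain \<sigma> where s: "\<sigma> permutes {1..m}" "L = ?line \<sigma>" by auto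
    have "set L = {1..m}" using s permutes_image[OF s(1)]
      by (simp del: upt_Suc add: atLeastLessThanSuc_atLeastAtMost)
    moreover have "distinct L" using s permutes_inj_on[OF s(1)]
      by (simp del: upt_Suc add: distinct_map)
    ultimately show "L \<in> permutations_of_set {1..m}" by auto
  qed
  have "card (?line ` {\<sigma>. \<sigma> permutes {1..m}}) = card (permutations_of_set {1..m})"
    using card_image[OF inj] card_permutations[of "{1..m}" m] by simp
  then show ?thesis
    using inj card_subset_eq[OF finite_permutations_of_set sub] by (simp add: bij_betw_def)
qed

lemma desc_count_sum:
  "(\<Sum>k=1..m. desc_count \<sigma> m k) = maj (map \<sigma> [1..<Suc m])"
proof -
  define D where "D = {j\<in>{1..<m}. \<sigma> (j+1) < \<sigma> j}"
  have "desc_count \<sigma> m k = (\<Sum>j\<in>D. if k \<le> j then 1 else 0)" if "k \<in> {1..m}" for k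
  proof -
    have "{j. k \<le> j \<and> j \<le> m - 1 \<and> \<sigma> j > \<sigma> (j+1)} = {j\<in>D. k \<le> j}"
      using that by (auto simp: D_def)
    then show ?thesis by (simp add: desc_count_def sum.inter_filter[symmetric] D_def)
  qed
  then have "(\<Sum>k=1..m. desc_count \<sigma> m k) = (\<Sum>j\<in>D. \<Sum>k=1..m. if k \<le> j then 1 else 0)"
    by (simp add: sum.swap[of _ D])
  also have "\<dots> = (\<Sum>j\<in>D. j)"
  proof (rule sum.cong[OF refl])
    fix j assume "j \<in> D"
    then have "{k\<in>{1..m}. k \<le> j} = {1..j}" by (auto simp: D_def)
    then show "(\<Sum>k=1..m. if k \<le> j then 1 else (0::nat)) = j"
      by (simp add: sum.inter_filter[symmetric])
  qed
  also have "\<dots> = (\<Sum>j\<in>{1..<m}. if \<sigma> (j+1) < \<sigma> j then j else 0)"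
    unfolding D_def by (subst sum.inter_filter) auto
  also have "\<dots> = maj (map \<sigma> [1..<Suc m])"
    unfolding maj_def by (rule sum.cong) (auto simp del: upt_Suc simp add: nth_map)
  finally show ?thesis .
qed

lemma q_int_prod: "(\<Prod>i<m. q_int X i) * (1 - X)^m = (\<Prod>k=1..m. 1 - X^k)"
proof (induction m)
  case (Suc m)
  have "1 - X ^ Suc m = (1 - X) * q_int X m"
    using one_diff_power_eq[of X "Suc m"] by (simp only: q_int_def lessThan_Suc_atMost)
  have "(\<Prod>i<Suc m. q_int X i) * (1 - X)^Suc m
      = ((\<Prod>i<m. q_int X i) * (1 - X)^m) * ((1 - X) * q_int X m)"
    by (simp add: algebra_simps)
  also have "\<dots> = (\<Prod>k=1..m. 1 - X^k) * (1 - X ^ Suc m)"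
    using Suc \<open>1 - X ^ Suc m = (1 - X) * q_int X m\<close> by simp
  finally show ?case by simp
qed simp

theorem AX_coeff_closed_form:
  fixes X :: complex
  assumes "cmod X \<noteq> 1"
  shows "AX_coeff X m = (X / (1 - X))^m"
proof -
  define Pm where "Pm = (\<Prod>k=1..m. 1 - X^k)"
  have "X^k \<noteq> 1" if "k \<ge> 1" for k
    using assms that by (metis power_eq_1_iff not_one_le_zero)
  then have Pm0: "Pm \<noteq> 0" by (simp add: Pm_def)
  have summand: "(\<Prod>k=1..m. X ^ (desc_count \<sigma> m k + 1) / (1 - X ^ k))
      = X^m / Pm * X ^ maj (map \<sigma> [1..<Suc m])" for \<sigma>
  proof -
    have e: "(\<Sum>k=1..m. desc_count \<sigma> m k + 1) = m + maj (map \<sigma> [1..<Suc m])"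
      unfolding sum.distrib desc_count_sum by simp
    have "(\<Prod>k=1..m. X ^ (desc_count \<sigma> m k + 1) / (1 - X ^ k))
        = (\<Prod>k=1..m. X ^ (desc_count \<sigma> m k + 1)) / Pm"
      by (simp only: prod_dividef Pm_def)
    also have "\<dots> = X ^ (m + maj (map \<sigma> [1..<Suc m])) / Pm"
      by (simp only: power_sum[symmetric] e)
    finally show ?thesis by (simp add: power_add del: upt_Suc)
  qed
  have "AX_coeff X m = X^m / Pm * (\<Sum>\<sigma>\<in>{\<sigma>. \<sigma> permutes {1..m}}. X ^ maj (map \<sigma> [1..<Suc m]))"
    unfolding AX_coeff_def summand by (simp add: sum_distrib_left)
  also have "(\<Sum>\<sigma>\<in>{\<sigma>. \<sigma> permutes {1..m}}. X ^ maj (map \<sigma> [1..<Suc m]))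
      = (\<Sum>L\<in>permutations_of_set {1..m}. X ^ maj L)"
    by (rule sum.reindex_bij_betw[OF permutes_one_line_bij])
  also have "\<dots> = (\<Prod>i<m. q_int X i)" by (simp add: maj_generating_function)
  finally have A: "AX_coeff X m = X^m / Pm * (\<Prod>i<m. q_int X i)" .
  have Pm: "Pm = (\<Prod>i<m. q_int X i) * (1 - X)^m" by (simp add: q_int_prod Pm_def)
  then have "(\<Prod>i<m. q_int X i) \<noteq> 0" "(1 - X)^m \<noteq> 0" using Pm0 by auto
  then show ?thesis unfolding A Pm by (simp add: field_simps power_divide)
qed

section \<open>Integrals over a period of the shifted line\<close>

text \<open>On the line y = x - i delta (x real) put X = exp(-2 pi i y), so |X| = exp(-2 pi delta) < 1,
  and W = 1/(1 - X).  Then X/(1-X) = W - 1 and X^{-1}/(1 - X^{-1}) = - W.\<close>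
definition Xline :: "real \<Rightarrow> complex \<Rightarrow> complex" where
  "Xline \<delta> z = exp (- 2 * pi * \<i> * (z - \<i> * of_real \<delta>))"

definition Wline :: "real \<Rightarrow> complex \<Rightarrow> complex" where
  "Wline \<delta> z = 1 / (1 - Xline \<delta> z)"

lemma Xline_deriv: "(Xline \<delta> has_field_derivative (- 2 * pi * \<i>) * Xline \<delta> z) (at z)"
  unfolding Xline_def by (auto intro!: derivative_eq_intros)

lemma norm_Xline_lt_1: "\<delta> > 0 \<Longrightarrow> cmod (Xline \<delta> (of_real x)) < 1"
  by (simp add: Xline_def norm_exp_eq_Re algebra_simps)

lemma Xline_nonzero: "Xline \<delta> z \<noteq> 0"
  by (simp add: Xline_def)

lemma Xline_periodic: "Xline \<delta> (of_real 1) = Xline \<delta> (of_real 0)"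
proof -
  have "Xline \<delta> (of_real 1) = exp (- 2 * pi * \<i> * (0 - \<i> * of_real \<delta>) + (- (2 * of_real pi * \<i>)))"
    unfolding Xline_def by (simp add: algebra_simps)
  then show ?thesis unfolding exp_add Xline_def exp_minus by simp
qed

lemma Wline_periodic: "Wline \<delta> (of_real 1) = Wline \<delta> (of_real 0)"
  unfolding Wline_def using Xline_periodic by simp

lemma Wline_deriv:
  assumes "Xline \<delta> z \<noteq> 1"
  shows "(Wline \<delta> has_field_derivative (- 2 * pi * \<i>) * (Wline \<delta> z ^ 2 - Wline \<delta> z)) (at z)"
proof -
  have "((\<lambda>z. 1 / (1 - Xline \<delta> z)) has_field_derivative
      - (0 - (- 2 * pi * \<i>) * Xline \<delta> z) / (1 - Xline \<delta> z)^2) (at z)"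
    using assms by (auto intro!: derivative_eq_intros Xline_deriv simp: power2_eq_square)
  moreover have "- (0 - (- 2 * pi * \<i>) * Xline \<delta> z) / (1 - Xline \<delta> z)^2
      = (- 2 * pi * \<i>) * (Wline \<delta> z ^ 2 - Wline \<delta> z)"
  proof -
    define u where "u = 1 - Xline \<delta> z"
    have u: "u \<noteq> 0" and X: "Xline \<delta> z = 1 - u" using assms by (simp_all add: u_def)
    show ?thesis unfolding Wline_def X using u by (simp add: field_simps power2_eq_square)
  qed
  ultimately show ?thesis unfolding Wline_def by simp
qed

lemma Wline_Re_pos:
  assumes "\<delta> > 0" shows "Re (Wline \<delta> (of_real x)) > 0"
proof -
  define X where "X = Xline \<delta> (of_real x)"
  have "cmod X < 1" using norm_Xline_lt_1[OF assms] by (simp add: X_def)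
  then have "Re X < 1" using complex_Re_le_cmod[of X] by linarith
  then have r: "Re (1 - X) > 0" by simp
  then have "(Re (1 - X))\<^sup>2 + (Im (1 - X))\<^sup>2 > 0" by (simp add: add_pos_nonneg)
  then show ?thesis using r unfolding Wline_def X_def[symmetric]
    by (simp add: divide_inverse inverse_complex.sel(1))
qed

text \<open>A periodic primitive of W^{n+1} - W^n: W^n / (c n), or log W / c for n = 0,
  where c = -2 pi i; the logarithm is holomorphic along the line since Re W > 0.\<close>
definition Wline_prim :: "real \<Rightarrow> nat \<Rightarrow> complex \<Rightarrow> complex" where
  "Wline_prim \<delta> n z = (if n = 0 then Ln (Wline \<delta> z) / (- 2 * pi * \<i>)
                        else Wline \<delta> z ^ n / (- 2 * pi * \<i> * of_nat n))"

lemma Wline_prim_deriv: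
  assumes "\<delta> > 0"
  shows "(Wline_prim \<delta> n has_field_derivative (Wline \<delta> (of_real x) ^ Suc n - Wline \<delta> (of_real x) ^ n))
      (at (of_real x))"
proof -
  define c :: complex where "c = - 2 * pi * \<i>"
  define w where "w = Wline \<delta> (of_real x)"
  have c0: "c \<noteq> 0" by (simp add: c_def)
  have W': "(Wline \<delta> has_field_derivative c * (w ^ 2 - w)) (at (of_real x))"
    unfolding c_def w_def by (rule Wline_deriv) (use norm_Xline_lt_1[OF assms, of x] in auto)
  have w: "Re w > 0" using Wline_Re_pos[OF assms] by (simp add: w_def)
  then have w0: "w \<noteq> 0" by auto
  show ?thesis
  proof (cases "n = 0")
    case True
    have "w \<notin> \<real>\<^sub>\<le>\<^sub>0" using w by (auto simp: complex_nonpos_Reals_iff)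
    then have "((\<lambda>z. Ln (Wline \<delta> z) / c) has_field_derivative inverse w * (c * (w ^ 2 - w)) / c)
        (at (of_real x))"
      unfolding w_def by (intro DERIV_cdivide DERIV_chain'[OF W'[unfolded w_def]] has_field_derivative_Ln)
    moreover have "inverse w * (c * (w ^ 2 - w)) / c = w ^ Suc n - w ^ n"
      using True c0 w0 by (simp add: field_simps power2_eq_square)
    ultimately show ?thesis using True unfolding Wline_prim_def c_def w_def by simp
  next
    case False
    then obtain m where m: "n = Suc m" by (cases n) auto
    have "((\<lambda>z. Wline \<delta> z ^ n / (c * of_nat n)) has_field_derivative
        of_nat n * (c * (w ^ 2 - w) * w ^ (n - Suc 0)) / (c * of_nat n)) (at (of_real x))"
      unfolding w_def by (intro DERIV_cdivide DERIV_power W'[unfolded w_def])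
    moreover have "of_nat n * (c * (w ^ 2 - w) * w ^ (n - Suc 0)) / (c * of_nat n) = w ^ Suc n - w ^ n"
      using c0 unfolding m by (simp add: field_simps power2_eq_square del: of_nat_Suc)
    ultimately show ?thesis using False unfolding Wline_prim_def c_def w_def by simp
  qed
qed

lemma integral_Wline_step:
  assumes "\<delta> > 0"
  shows "((\<lambda>x. Wline \<delta> (of_real x) ^ Suc n - Wline \<delta> (of_real x) ^ n) has_integral 0) {0..1}"
proof -
  have "((\<lambda>x. Wline \<delta> (of_real x) ^ Suc n - Wline \<delta> (of_real x) ^ n) has_integral
      (Wline_prim \<delta> n (of_real 1) - Wline_prim \<delta> n (of_real 0))) {0..1}"
    by (rule fundamental_theorem_of_calculus)
       (auto intro!: has_vector_derivative_real_field Wline_prim_deriv[OF assms] simp del: power_Suc)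
  moreover have "Wline_prim \<delta> n (of_real 1) = Wline_prim \<delta> n (of_real 0)"
    unfolding Wline_prim_def using Wline_periodic by simp
  ultimately show ?thesis by simp
qed

lemma integral_Wline_power:
  assumes "\<delta> > 0"
  shows "((\<lambda>x. Wline \<delta> (of_real x) ^ n) has_integral 1) {0..1}"
proof (induction n)
  case 0
  show ?case using has_integral_const_real[of "1::complex" 0 1] by simp
next
  case (Suc n)
  have "((\<lambda>x. (Wline \<delta> (of_real x) ^ Suc n - Wline \<delta> (of_real x) ^ n) + Wline \<delta> (of_real x) ^ n)
      has_integral (0 + 1)) {0..1}"
    by (intro has_integral_add integral_Wline_step[OF assms] Suc)
  then show ?case by simp
qed

theorem integral_poly_Wline:
  assumes "\<delta> > 0"
  shows "((\<lambda>x. poly R (Wline \<delta> (of_real x))) has_integral poly R 1) {0..1}"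
proof -
  have "((\<lambda>x. \<Sum>i\<le>degree R. coeff R i * Wline \<delta> (of_real x) ^ i)
      has_integral (\<Sum>i\<le>degree R. coeff R i * 1)) {0..1}"
    by (intro has_integral_sum has_integral_mult_right integral_Wline_power[OF assms]) auto
  then show ?thesis by (simp add: poly_altdef)
qed

section \<open>The Shapovalov form of the Verma module\<close>

lemma verma_f_pow: "(verma_f ^^ m) (\<lambda>i. if i = 0 then 1 else 0) = (\<lambda>i. if i = m then 1 else 0)"
proof (induction m)
  case (Suc m)
  have "(verma_f ^^ Suc m) (\<lambda>i. if i = 0 then 1 else 0) = verma_f (\<lambda>i. if i = m then 1 else 0)"
    using Suc by simp
  also have "\<dots> = (\<lambda>i. if i = Suc m then 1 else 0)" by (rule ext) (auto simp: verma_f_def)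
  finally show ?case .
qed simp

lemma verma_e_pow: "(verma_e muh ^^ j) (\<lambda>i. if i = n + j then c else 0) =
   (\<lambda>i. if i = n then c * (\<Prod>r<j. of_nat (n+r+1) * (muh - of_nat (n+r))) else 0)"
proof (induction j arbitrary: c)
  case (Suc j)
  have e: "verma_e muh (\<lambda>i. if i = n + Suc j then c else 0) =
      (\<lambda>i. if i = n + j then c * (of_nat (n+j+1) * (muh - of_nat (n+j))) else 0)"
    by (auto simp: verma_e_def)
  show ?case
    unfolding funpow_Suc_right o_apply e Suc.IH by (auto simp: algebra_simps)
qed auto

lemma shapU_diag: "shapU muh j j = (\<Prod>r<j. of_nat (r+1) * (muh - of_nat r))"
proof -
  have "shapU muh j j = ((verma_e muh ^^ j) (\<lambda>i. if i = 0 + j then 1 else 0)) 0"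
    by (simp add: shapU_def verma_f_pow)
  then show ?thesis by (simp only: verma_e_pow) simp
qed

section \<open>The polynomial of a critical point\<close>

definition crit_poly :: "nat \<Rightarrow> (nat \<Rightarrow> complex) \<Rightarrow> complex poly" where
  "crit_poly k t = (\<Prod>j\<in>{1..k}. [:- t j, 1:])"

lemma poly_crit_poly: "poly (crit_poly k t) z = (\<Prod>j\<in>{1..k}. z - t j)"
  by (simp add: crit_poly_def poly_prod)

lemma degree_crit_poly: "degree (crit_poly k t) = k"
  unfolding crit_poly_def by (subst degree_prod_eq_sum_degree) auto

lemma coeff_crit_poly_top: "coeff (crit_poly k t) k = 1"
proof -
  have "lead_coeff (crit_poly k t) = 1" unfolding crit_poly_def by (simp add: lead_coeff_prod)
  then show ?thesis by (simp add: degree_crit_poly)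
qed

lemma poly_pderiv_prod_linear:
  fixes t :: "nat \<Rightarrow> complex"
  assumes "finite S" "\<forall>l\<in>S. z \<noteq> t l"
  shows "poly (pderiv (\<Prod>l\<in>S. [:- t l, 1:])) z = (\<Prod>l\<in>S. z - t l) * (\<Sum>l\<in>S. 1 / (z - t l))"
proof -
  have pd: "pderiv [:- t a, 1:] = 1" for a by (simp add: pderiv_pCons)
  have "poly (pderiv (\<Prod>l\<in>S. [:- t l, 1:])) z = (\<Sum>a\<in>S. \<Prod>l\<in>S - {a}. z - t l)"
    by (simp add: pderiv_prod pd poly_sum poly_prod)
  also have "\<dots> = (\<Sum>a\<in>S. (\<Prod>l\<in>S. z - t l) * (1 / (z - t a)))"
  proof (rule sum.cong[OF refl])
    fix a assume a: "a \<in> S"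
    have "(\<Prod>l\<in>S. z - t l) = (z - t a) * (\<Prod>l\<in>S - {a}. z - t l)"
      using a assms(1) by (simp add: prod.remove)
    then show "(\<Prod>l\<in>S - {a}. z - t l) = (\<Prod>l\<in>S. z - t l) * (1 / (z - t a))"
      using assms(2) a by (simp add: field_simps)
  qed
  finally show ?thesis by (simp add: sum_distrib_left)
qed

definition hyp_op :: "nat \<Rightarrow> complex \<Rightarrow> complex poly \<Rightarrow> complex poly" where
  "hyp_op k xi1 p = pCons 0 (pCons 0 (pderiv (pderiv p))) - pCons 0 (pderiv (pderiv p))
     - smult (2 * of_nat k + xi1 - 1) (pCons 0 (pderiv p)) + smult (xi1 - 1) (pderiv p)
     + smult (of_nat k * (of_nat k + xi1)) p"

lemma poly_hyp_op: "poly (hyp_op k xi1 p) z =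
     z * (z - 1) * poly (pderiv (pderiv p)) z
   - ((2 * of_nat k + xi1 - 1) * z - (xi1 - 1)) * poly (pderiv p) z
   + of_nat k * (of_nat k + xi1) * poly p z"
  by (simp add: hyp_op_def algebra_simps)

text \<open>On coefficients the operator is a two-term recursion; in particular it kills the
  coefficient of z^k, so it maps polynomials of degree k to polynomials of degree < k.\<close>
lemma coeff_hyp_op: "coeff (hyp_op k xi1 p) m =
   (of_nat m - of_nat k) * (of_nat m - of_nat k - xi1) * coeff p m
   - of_nat (m+1) * (of_nat (m+1) - xi1) * coeff p (m+1)"
proof (cases m)
  case (Suc m')
  then show ?thesis by (cases m') (simp_all add: hyp_op_def coeff_pderiv algebra_simps)
qed (simp add: hyp_op_def coeff_pderiv algebra_simps)

text \<open>The critical point equations say exactly that hyp_op kills crit_poly at every t_j: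
  at a simple root, p'' / p' = 2 sum_{l<>j} 1/(t_j - t_l).\<close>
lemma hyp_op_crit_root:
  assumes crit: "is_crit k xi1 t" and j: "j \<in> {1..k}"
  shows "poly (hyp_op k xi1 (crit_poly k t)) (t j) = 0"
proof -
  define S where "S = {1..k} - {j}"
  define q where "q = (\<Prod>l\<in>S. [:- t l, 1:])"
  define Q where "Q = poly q (t j)"
  define \<Sigma> where "\<Sigma> = (\<Sum>l\<in>S. 1 / (t j - t l))"
  have dist: "\<forall>l\<in>S. t j \<noteq> t l" using crit j by (auto simp: is_crit_def S_def)
  have tj: "t j \<noteq> 0" "t j \<noteq> 1" using crit j by (auto simp: is_crit_def)
  have "dPhi_H k xi1 t j = 0" using crit j by (auto simp: is_crit_def)
  moreover have "(\<Sum>l\<in>S. 2 / (t j - t l)) = 2 * \<Sigma>" by (simp add: \<Sigma>_def sum_distrib_left)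
  ultimately have crit_eq: "2 * \<Sigma> = 2 * of_nat k / (t j - 1) + (xi1 - 1) / t j"
    unfolding dPhi_H_def S_def[symmetric] by (simp add: algebra_simps)
  have p: "crit_poly k t = [:- t j, 1:] * q"
    unfolding crit_poly_def q_def S_def using j by (simp add: prod.remove)
  have pl: "pderiv [:- t j, 1:] = 1" by (simp add: pderiv_pCons)
  have d1: "pderiv (crit_poly k t) = [:- t j, 1:] * pderiv q + q"
    unfolding p pderiv_mult pl by simp
  have d2: "pderiv (pderiv (crit_poly k t)) = [:- t j, 1:] * pderiv (pderiv q) + pderiv q + pderiv q"
    unfolding d1 pderiv_add pderiv_mult pl by simp
  have Q: "Q = (\<Prod>l\<in>S. t j - t l)" by (simp add: Q_def q_def poly_prod)
  have q1: "poly (pderiv q) (t j) = Q * \<Sigma>"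
    unfolding q_def \<Sigma>_def Q by (rule poly_pderiv_prod_linear) (use dist in \<open>auto simp: S_def\<close>)
  have v0: "poly (crit_poly k t) (t j) = 0" by (simp add: p)
  have v1: "poly (pderiv (crit_poly k t)) (t j) = Q" by (simp add: d1 Q_def)
  have v2: "poly (pderiv (pderiv (crit_poly k t))) (t j) = 2 * Q * \<Sigma>" by (simp add: d2 q1)
  have "poly (hyp_op k xi1 (crit_poly k t)) (t j)
      = Q * (t j * (t j - 1) * (2 * \<Sigma>) - (2 * of_nat k + xi1 - 1) * t j + (xi1 - 1))"
    unfolding poly_hyp_op v0 v1 v2 by (simp add: algebra_simps)
  also have "t j * (t j - 1) * (2 * \<Sigma>) = 2 * of_nat k * t j + (xi1 - 1) * (t j - 1)"
    unfolding crit_eq using tj by (simp add: field_simps)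
  finally show ?thesis by (simp add: algebra_simps)
qed

text \<open>Since hyp_op (crit_poly) has degree < k and vanishes at the k distinct t_j,
  it is zero; so the coefficients c_m of crit_poly satisfy a two-term recursion.\<close>
lemma crit_poly_coeff_recursion:
  assumes crit: "is_crit k xi1 t"
  shows "(of_nat m - of_nat k) * (of_nat m - of_nat k - xi1) * coeff (crit_poly k t) m
       = of_nat (m+1) * (of_nat (m+1) - xi1) * coeff (crit_poly k t) (m+1)"
proof (cases "k = 0")
  case True
  then show ?thesis by (cases m) (auto simp: crit_poly_def)
next
  case False
  let ?R = "hyp_op k xi1 (crit_poly k t)"
  have "coeff ?R m = 0" if "m \<ge> k" for m
    using that by (auto simp: coeff_hyp_op coeff_eq_0 degree_crit_poly)
  then have "degree ?R \<le> k - 1" by (intro degree_le) auto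
  then have deg: "degree ?R < k" using False by linarith
  have card: "card (t ` {1..k}) = k"
    using crit by (subst card_image) (auto simp: is_crit_def inj_on_def)
  have "?R = 0"
    by (rule poly_eqI_degree[of "t ` {1..k}"]) (use hyp_op_crit_root[OF crit] deg card False in auto)
  then have "coeff ?R m = 0" by simp
  then show ?thesis by (simp add: coeff_hyp_op)
qed

section \<open>Two hypergeometric evaluations\<close>

lemma prod_plus_pochhammer: "(\<Prod>i=1..k. x + of_nat i) = pochhammer (x + 1) k"
  unfolding pochhammer_prod by (simp add: prod.atLeast1_atMost_eq atLeast0LessThan algebra_simps)

lemma prod_shifted_pochhammer: "(\<Prod>r<j. x - 1 - of_nat r) = (-1)^j * pochhammer (1 - x) j"
  for x :: complex
  by (induction j) (simp_all add: pochhammer_Suc algebra_simps)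

lemma prod_minus_pochhammer: "(\<Prod>i=1..k. x - of_nat i) = (-1)^k * pochhammer (1 - x) k"
  for x :: complex
proof -
  have "(\<Prod>i=1..k. x - of_nat i) = (\<Prod>r<k. x - 1 - of_nat r)"
    by (simp add: prod.atLeast1_atMost_eq algebra_simps)
  then show ?thesis by (simp only: prod_shifted_pochhammer)
qed

lemma recursion_closed_form:
  fixes c :: "nat \<Rightarrow> complex" and xi1 :: complex
  assumes ck: "c k = 1"
    and rec: "\<And>m. (of_nat m - of_nat k) * (of_nat m - of_nat k - xi1) * c m
       = of_nat (m+1) * (of_nat (m+1) - xi1) * c (m+1)"
  shows "d \<le> k \<Longrightarrow> c (k - d) * pochhammer (xi1 + 1) d
           = of_nat (k choose d) * (\<Prod>i<d. of_nat k - xi1 - of_nat i)"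
proof (induction d)
  case 0 then show ?case by (simp add: ck)
next
  case (Suc d)
  define m where "m = k - Suc d"
  have m1: "m + 1 = k - d" using Suc.prems by (simp add: m_def)
  have mk: "(of_nat m :: complex) = of_nat k - of_nat d - 1"
    using Suc.prems by (simp add: m_def of_nat_diff)
  have r: "(of_nat (d+1) :: complex) * (of_nat (d+1) + xi1) * c m
      = (of_nat k - of_nat d) * (of_nat k - of_nat d - xi1) * c (k - d)"
    using rec[of m] unfolding m1 using Suc.prems by (simp add: mk of_nat_diff algebra_simps)
  have IH: "c (k - d) * pochhammer (xi1 + 1) d = of_nat (k choose d) * (\<Prod>i<d. of_nat k - xi1 - of_nat i)"
    using Suc by simp
  have "Suc d * (k choose Suc d) = (k - d) * (k choose d)"
    using binomial_absorption[of d k] binomial_absorb_comp[of k d] by simp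
  then have binom: "of_nat (Suc d) * (of_nat (k choose Suc d) :: complex) = (of_nat k - of_nat d) * of_nat (k choose d)"
    using Suc.prems by (metis of_nat_diff of_nat_mult Suc_leD)
  have "of_nat (Suc d) * (c m * pochhammer (xi1 + 1) (Suc d))
      = ((of_nat (d+1)) * (of_nat (d+1) + xi1) * c m) * pochhammer (xi1 + 1) d"
    by (simp add: pochhammer_Suc algebra_simps)
  also have "\<dots> = (of_nat k - of_nat d) * (of_nat k - of_nat d - xi1) * (c (k - d) * pochhammer (xi1 + 1) d)"
    unfolding r by (simp add: algebra_simps)
  also have "\<dots> = (of_nat (Suc d) * of_nat (k choose Suc d)) * ((\<Prod>i<d. of_nat k - xi1 - of_nat i) * (of_nat k - xi1 - of_nat d))"
    unfolding IH binom by (simp add: algebra_simps)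
  also have "\<dots> = of_nat (Suc d) * (of_nat (k choose Suc d) * (\<Prod>i<Suc d. of_nat k - xi1 - of_nat i))"
    by (simp only: prod.lessThan_Suc mult.assoc)
  finally show ?case unfolding m_def by (simp del: of_nat_Suc)
qed

text \<open>By Chu-Vandermonde, the coefficients of recursion_closed_form add up to
  (sum_m c_m) (xi1+1)_k = k! binom(2k,k).\<close>
lemma recursion_sum:
  fixes c :: "nat \<Rightarrow> complex" and xi1 :: complex
  assumes cl: "\<And>d. d \<le> k \<Longrightarrow> c (k - d) * pochhammer (xi1 + 1) d
           = of_nat (k choose d) * (\<Prod>i<d. of_nat k - xi1 - of_nat i)"
  shows "(\<Sum>m\<le>k. c m) * pochhammer (xi1 + 1) k = of_nat (fact k * (2*k choose k))"
proof -
  define a where "a = of_nat k - xi1"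
  define b where "b = of_nat k + xi1"
  have summand: "c (k - d) * pochhammer (xi1 + 1) k = fact k * ((a gchoose d) * (b gchoose (k - d)))"
    if d: "d \<le> k" for d
  proof -
    have "c (k - d) * pochhammer (xi1 + 1) k
        = (c (k - d) * pochhammer (xi1 + 1) d) * pochhammer (xi1 + 1 + of_nat d) (k - d)"
      using pochhammer_product[OF d, of "xi1 + 1"] by (simp add: mult_ac)
    also have "\<dots> = of_nat (k choose d) * (\<Prod>i<d. of_nat k - xi1 - of_nat i)
        * pochhammer (xi1 + 1 + of_nat d) (k - d)"
      by (simp add: cl[OF d])
    also have "(\<Prod>i<d. of_nat k - xi1 - of_nat i) = (a gchoose d) * fact d"
      by (simp add: gbinomial_prod_rev a_def atLeast0LessThan)
    also have "pochhammer (xi1 + 1 + of_nat d) (k - d) = (b gchoose (k - d)) * fact (k - d)"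
    proof -
      have "b - of_nat (k - d) + 1 = xi1 + 1 + of_nat d" using d by (simp add: b_def of_nat_diff)
      then show ?thesis by (simp add: gbinomial_pochhammer' add_ac)
    qed
    also have "of_nat (k choose d) = (fact k / (fact d * fact (k - d)) :: complex)"
      by (rule binomial_fact[OF d])
    finally show ?thesis by (simp add: field_simps)
  qed
  have "(\<Sum>m\<le>k. c m) * pochhammer (xi1 + 1) k = (\<Sum>d=0..k. c (k - d) * pochhammer (xi1 + 1) k)"
    by (subst sum.atLeastAtMost_rev) (simp add: sum_distrib_right atLeast0AtMost)
  also have "\<dots> = fact k * (\<Sum>d=0..k. (a gchoose d) * (b gchoose (k - d)))"
    by (simp add: summand sum_distrib_left)
  also have "(\<Sum>d=0..k. (a gchoose d) * (b gchoose (k - d))) = (a + b) gchoose k"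
    by (rule gbinomial_Vandermonde)
  also have "(a + b) gchoose k = of_nat (2*k choose k)"
    by (simp add: a_def b_def binomial_gbinomial)
  finally show ?thesis by simp
qed

lemma fact_times_central_binomial: "fact k * (2*k choose k) = (\<Prod>i=k+1..2*k. i)"
proof -
  have "fact (2*k) div fact k = (\<Prod>i=k+1..2*k. i)" by (rule fact_div_fact) simp
  moreover have "fact k * (fact k * (2*k choose k)) = fact (2*k)"
    using binomial_fact_lemma[of k "2*k"] by (simp add: mult_ac)
  ultimately show ?thesis by (metis fact_nonzero nonzero_mult_div_cancel_left)
qed

theorem crit_poly_at_one:
  assumes "is_crit k xi1 t"
  shows "poly (crit_poly k t) 1 * (\<Prod>i=1..k. xi1 + of_nat i) = of_nat (\<Prod>i=k+1..2*k. i)"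
proof -
  have "poly (crit_poly k t) 1 = (\<Sum>m\<le>k. coeff (crit_poly k t) m)"
    by (simp add: poly_altdef degree_crit_poly)
  moreover have "(\<Sum>m\<le>k. coeff (crit_poly k t) m) * pochhammer (xi1 + 1) k = of_nat (fact k * (2*k choose k))"
    by (intro recursion_sum recursion_closed_form[OF coeff_crit_poly_top]
        crit_poly_coeff_recursion[OF assms])
  ultimately show ?thesis
    unfolding prod_plus_pochhammer by (simp add: fact_times_central_binomial)
qed

lemma falling_prod: "j \<le> k \<Longrightarrow> (\<Prod>r<j. (of_nat (k - r) :: complex)) = fact k / fact (k - j)"
proof (induction j)
  case (Suc j)
  then have jk: "j < k" by simp
  have f: "(fact (k - j) :: complex) = of_nat (k - j) * fact (k - Suc j)"
    using jk by (metis Suc_diff_Suc fact_Suc)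
  have "(fact (k - Suc j) :: complex) \<noteq> 0" by simp
  then show ?case using Suc jk f by (simp add: field_simps)
qed simp

text \<open>Under the hypothesis xi1 \<notin> {1..k} the rising factorials (1 - xi1)_j, j <= k, and hence
  the entries S_{xi-rho}(f^j, f^j) appearing in psi, are nonzero.\<close>
lemma pochhammer_one_minus_nonzero:
  fixes xi1 :: complex
  assumes "\<forall>m\<in>{1..k}. xi1 \<noteq> of_nat m" "j \<le> k"
  shows "pochhammer (1 - xi1) j \<noteq> 0"
proof
  assume "pochhammer (1 - xi1) j = 0"
  then obtain r where "r < j" "1 - xi1 = - of_nat r" by (auto simp: pochhammer_eq_0_iff)
  then have "r + 1 \<in> {1..k}" "xi1 = of_nat (r + 1)"
    using assms(2) by (simp_all add: algebra_simps eq_neg_iff_add_eq_0)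
  then show False using assms(1) by blast
qed

lemma shap_sum_summand:
  fixes xi1 :: complex
  assumes pz: "pochhammer (1 - xi1) j \<noteq> 0" and j: "j \<le> k"
  shows "ef_coeff k j / shapU (xi1 - 1) j j * ((-1)^k * pochhammer (1 - xi1) k)
      = fact k * (-1)^k * ((- (of_nat k + 1)) gchoose j) * ((of_nat k - xi1) gchoose (k - j))"
proof -
  have sh: "shapU (xi1 - 1) j j = fact j * ((-1)^j * pochhammer (1 - xi1) j)"
    unfolding shapU_diag prod.distrib prod_shifted_pochhammer[symmetric]
    by (simp add: fact_prod_Suc atLeast0LessThan algebra_simps)
  have ef: "ef_coeff k j = fact k / fact (k - j) * pochhammer (of_nat k + 1) j"
    unfolding ef_coeff_def prod.distrib falling_prod[OF j]
    by (simp add: pochhammer_prod atLeast0LessThan algebra_simps)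
  have pk: "pochhammer (1 - xi1) k = pochhammer (1 - xi1) j * pochhammer (1 - xi1 + of_nat j) (k - j)"
    by (rule pochhammer_product[OF j])
  have A: "(- (of_nat k + 1)) gchoose j = (-1)^j * pochhammer (of_nat k + 1) j / (fact j :: complex)"
    by (simp add: gbinomial_pochhammer add.commute)
  have e: "of_nat k - xi1 - of_nat (k - j) + 1 = 1 - xi1 + of_nat j" using j by (simp add: of_nat_diff)
  have B: "(of_nat k - xi1) gchoose (k - j) = pochhammer (1 - xi1 + of_nat j) (k - j) / fact (k - j)"
    by (subst gbinomial_pochhammer') (simp only: e)
  have s: "((-1::complex)^j) * (-1)^j = 1" by (simp add: power_mult_distrib[symmetric])
  show ?thesis unfolding sh ef pk A B using pz s by (simp add: field_simps)
qed

text \<open>Chu-Vandermonde again: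
  (sum_{j<=k} a_j / S_{xi-rho}(f^j, f^j)) (xi1-1)...(xi1-k) = (xi1+1)...(xi1+k).\<close>
theorem shap_sum:
  fixes xi1 :: complex
  assumes hyp: "\<forall>m\<in>{1..k}. xi1 \<noteq> of_nat m"
  shows "(\<Sum>j\<le>k. ef_coeff k j / shapU (xi1 - 1) j j) * (\<Prod>i=1..k. xi1 - of_nat i)
     = (\<Prod>i=1..k. xi1 + of_nat i)"
proof -
  define A :: complex where "A = - (of_nat k + 1)"
  define B where "B = of_nat k - xi1"
  have "(\<Sum>j\<le>k. ef_coeff k j / shapU (xi1 - 1) j j) * ((-1)^k * pochhammer (1 - xi1) k)
      = fact k * (-1)^k * (\<Sum>j=0..k. (A gchoose j) * (B gchoose (k - j)))"
    unfolding sum_distrib_left sum_distrib_right atLeast0AtMost A_def B_def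
    by (rule sum.cong[OF refl], subst shap_sum_summand)
       (auto simp: pochhammer_one_minus_nonzero[OF hyp] mult.assoc)
  also have "(\<Sum>j=0..k. (A gchoose j) * (B gchoose (k - j))) = (A + B) gchoose k"
    by (rule gbinomial_Vandermonde)
  also have "(A + B) gchoose k = (-1)^k * pochhammer (xi1 + 1) k / fact k"
    by (simp add: gbinomial_pochhammer A_def B_def algebra_simps)
  finally have "(\<Sum>j\<le>k. ef_coeff k j / shapU (xi1 - 1) j j) * ((-1)^k * pochhammer (1 - xi1) k)
      = pochhammer (xi1 + 1) k"
    by (simp add: field_simps power_mult_distrib[symmetric])
  then show ?thesis by (simp only: prod_plus_pochhammer prod_minus_pochhammer)
qed

section \<open>The pairing on the weight-zero line\<close>

definition beta_poly :: "nat \<Rightarrow> complex \<Rightarrow> complex poly" where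
  "beta_poly k xi1 = (\<Sum>j\<le>2*k. monom (beta k xi1 j) j)"

lemma poly_beta_poly: "poly (beta_poly k xi1) w = (\<Sum>j\<le>2*k. beta k xi1 j * w ^ j)"
  by (simp add: beta_poly_def poly_sum poly_monom)

text \<open>Along the line, A_X(f^j) = (W - 1)^j and A_{X^{-1}}(f^j) = (-W)^j, so both factors of the
  integrand are polynomials in W.\<close>
lemma psi_factor_Xline:
  assumes "\<delta> > 0"
  shows "psi_factor k xi1 (Xline \<delta> (of_real x)) = poly (beta_poly k xi1) (Wline \<delta> (of_real x) - 1)"
    and "psi_factor k xi1 (inverse (Xline \<delta> (of_real x))) = poly (beta_poly k xi1) (- Wline \<delta> (of_real x))"
proof -
  define X where "X = Xline \<delta> (of_real x)"
  have X: "cmod X < 1" "X \<noteq> 0" using norm_Xline_lt_1[OF assms] Xline_nonzero by (auto simp: X_def)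
  then have "X \<noteq> 1" "cmod (inverse X) \<noteq> 1" by (auto simp: norm_inverse)
  then have "X / (1 - X) = Wline \<delta> (of_real x) - 1"
    "inverse X / (1 - inverse X) = - Wline \<delta> (of_real x)"
    using X(2) unfolding Wline_def X_def[symmetric] by (auto simp: field_simps)
  then show "psi_factor k xi1 (Xline \<delta> (of_real x)) = poly (beta_poly k xi1) (Wline \<delta> (of_real x) - 1)"
    "psi_factor k xi1 (inverse (Xline \<delta> (of_real x))) = poly (beta_poly k xi1) (- Wline \<delta> (of_real x))"
    using X \<open>cmod (inverse X) \<noteq> 1\<close>
    by (simp_all add: psi_factor_def poly_beta_poly AX_coeff_closed_form X_def[symmetric])
qed

text \<open>The pairing of psi(c f^k v) with itself: since S(psi(y), psi(-y)) is a polynomial in W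
  (the exponential prefactors cancel), the integral is the value of that polynomial at W = 1,
  i.e. c^2 S(f^k v, f^k v) B(0) B(-1) with B(0) = 1.\<close>
theorem pairing_middle:
  assumes "\<delta> > 0"
  shows "pairing k (psi k xi1 (unit_vec k c)) (psi k xi1 (unit_vec k c)) \<delta>
     = c^2 * shap_norm k k * (\<Sum>j\<le>k. ef_coeff k j / shapU (xi1 - 1) j j)"
proof -
  define B where "B = beta_poly k xi1"
  define R where "R = smult (c^2 * shap_norm k k) (pcompose B [:-1, 1:] * pcompose B [:0, -1:])"
  have integrand: "shap k (psi k xi1 (unit_vec k c) (of_real x - \<i> * of_real \<delta>))
      (psi k xi1 (unit_vec k c) (- (of_real x - \<i> * of_real \<delta>))) = poly R (Wline \<delta> (of_real x))" for x
  proof -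
    define y where "y = of_real x - \<i> * of_real \<delta>"
    have "exp (2 * pi * \<i> * (xi1 * y / 2)) * exp (2 * pi * \<i> * (xi1 * - y / 2)) = 1"
      by (simp add: exp_add[symmetric])
    moreover have X: "exp (- 2 * pi * \<i> * y) = Xline \<delta> (of_real x)"
      by (simp add: Xline_def y_def)
    moreover have "exp (- 2 * pi * \<i> * - y) = inverse (Xline \<delta> (of_real x))"
      by (simp only: mult_minus_right exp_minus X)
    ultimately show ?thesis
      unfolding y_def[symmetric] psi_middle shap_unit_vec[OF le_add2[of k k, folded mult_2]]
      by (simp add: R_def B_def psi_factor_Xline[OF assms] poly_pcompose power2_eq_square
          algebra_simps)
  qed
  have "pairing k (psi k xi1 (unit_vec k c)) (psi k xi1 (unit_vec k c)) \<delta> = poly R 1"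
    unfolding pairing_def integrand by (rule integral_unique[OF integral_poly_Wline[OF assms]])
  moreover have "poly B 0 = 1"
    by (simp add: B_def beta_poly_def poly_0_coeff_0 coeff_sum coeff_monom beta_def shapU_diag
        ef_coeff_def)
  moreover have "poly B (-1) = (\<Sum>j\<le>k. ef_coeff k j / shapU (xi1 - 1) j j)"
  proof -
    have "poly B (-1) = (\<Sum>j\<le>2*k. ef_coeff k j / shapU (xi1 - 1) j j)"
      unfolding B_def poly_beta_poly beta_def
      by (rule sum.cong[OF refl]) (simp add: divide_inverse mult_ac left_minus_one_mult_self)
    also have "\<dots> = (\<Sum>j\<le>k. ef_coeff k j / shapU (xi1 - 1) j j)"
      by (rule sum.mono_neutral_right) (auto simp: ef_coeff_vanishes)
    finally show ?thesis .
  qed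
  ultimately show ?thesis by (simp add: R_def poly_pcompose)
qed

lemma bethe_coeff_crit_poly:
  assumes "is_crit k xi1 t"
  shows "(\<Prod>j=1..k. 1 / (t j - 1)) * poly (crit_poly k t) 1 = (-1)^k"
proof -
  have "(\<Prod>j=1..k. 1 / (t j - 1)) * poly (crit_poly k t) 1 = (\<Prod>j=1..k. (1 - t j) / (t j - 1))"
    by (simp add: poly_crit_poly prod_dividef)
  also have "\<dots> = (\<Prod>j=1..k. -1)"
    using assms by (intro prod.cong) (auto simp: is_crit_def field_simps)
  finally show ?thesis by simp
qed


theorem theorem9p2:
  fixes k :: nat and xi1 :: complex and t :: "nat \<Rightarrow> complex" and \<delta> :: real
  assumes "\<forall>m\<in>{1..k}. xi1 \<noteq> of_nat m"
    and "is_isolated_crit k xi1 t"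
    and "\<delta> > 0"
  shows "pairing k (psi k xi1 (bethe_vec k t)) (psi k xi1 (bethe_vec k t)) \<delta> =
    ((\<Prod>i=1..k. xi1 + of_nat i) ^ 3 * of_nat (fact k)) /
    ((\<Prod>i=1..k. xi1 - of_nat i) * of_nat (\<Prod>i=k+1..2*k. i))"
    (is "?lhs = _")
proof -
  have crit: "is_crit k xi1 t" using assms(2) by (simp add: is_isolated_crit_def)
  define c where "c = (\<Prod>j=1..k. 1 / (t j - 1))"
  define p where "p = poly (crit_poly k t) 1"
  define S where "S = (\<Sum>j\<le>k. ef_coeff k j / shapU (xi1 - 1) j j)"
  define P where "P = (\<Prod>i=1..k. xi1 + of_nat i)"
  define M where "M = (\<Prod>i=1..k. xi1 - of_nat i)"
  define N :: complex where "N = of_nat (\<Prod>i=k+1..2*k. i)"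
  have pairing: "?lhs = c^2 * (fact k * N) * S"
    by (simp add: bethe_vec_middle pairing_middle[OF assms(3)] shap_norm_middle c_def S_def N_def)
  have cp: "c * p = (-1)^k" unfolding c_def p_def by (rule bethe_coeff_crit_poly[OF crit])
  have pP: "p * P = N" unfolding p_def P_def N_def by (rule crit_poly_at_one[OF crit])
  have SM: "S * M = P" unfolding S_def M_def P_def by (rule shap_sum[OF assms(1)])
  have M0: "M \<noteq> 0" using assms(1) by (auto simp: M_def)
  have N0: "N \<noteq> 0" by (simp add: N_def)
  have p0: "p \<noteq> 0" and P0: "P \<noteq> 0" using pP N0 by auto
  have "c = (-1)^k / p" using cp p0 by (simp add: field_simps)
  then have c2: "c^2 = 1 / p^2" by (simp add: power_divide flip: power_mult)
  have S: "S = P / M" using SM M0 by (simp add: field_simps)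
  have "?lhs = P^3 * fact k / (M * N)"
    unfolding pairing c2 S pP[symmetric] using p0 P0 M0
    by (simp add: divide_simps) (simp add: power2_eq_square power3_eq_cube)
  then show ?thesis by (simp add: P_def M_def N_def)
qed
end
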